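(* Consider the system $u_{n+1,x}^j = F^j(x,n,u_{n,x}^j,u_n,u_{n+1})$, $j=1,\dots,N$, with analytic $F^j$, which can be uniquely rewritten as $u_{n-1,x}^j=G^j(x,n,u_{n,x}^j,u_n,u_{n-1})$. Let $$Y=\sum_{j=1}^{N}\left(\alpha^j(1)\frac{\partial}{\partial u^j_{n,x}}+\alpha^j(2)\frac{\partial}{\partial u^j_{n,xx}}+\alpha^j(3)\frac{\partial}{\partial u^j_{n,xxx}}+\cdots\right)$$ be a vector field whose coefficients are functions of the dynamical variables. If $$[D_x,Y]=hY$$ for some function $h$ of the dynamical variables, then $Y=0$.
   Context: The dynamical variables are $u^j_n,u^j_{n\pm1},u^j_{n\pm2},\dots$ and $u^j_{n,x},u^j_{n,xx},\dots$ ($1\le j\le N$), treated as independent. $D_x$ is the total derivative with respect to $x$ acting on functions of the dynamical variables, where $x$-derivatives of shifted variables are expressed through the system: $D_x u^j_{n+1}=F^j_n$, $D_xu^j_{n+2}=F^j_{n+1}$, $\dots$, $D_xu^j_{n-1}=G^j_n$, $\dots$, with $F^j_{n+i}=F^j(x,n+i,u^j_{n+i,x},u_{n+i},u_{n+i+1})$ and $G^j_{n-i}=G^j(x,n-i,u^j_{n-i,x},u_{n-i},u_{n-i-1})$. *)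

theory Defs
  imports "HOL-Analysis.Analysis"
begin

text \<open>Components are indexed by a finite type 'j (so N = CARD('j)).
  DX is the independent variable x; DU j i is u^j_{n+i} (i :: int);
  DUX j m is the (m+1)-th x-derivative u^j_{n,x...x} of u^j_n.\<close>

datatype 'j dvar = DX | DU 'j int | DUX 'j nat

type_synonym 'j state = "'j dvar \<Rightarrow> real"

definition dep :: "('j state \<Rightarrow> real) \<Rightarrow> 'j dvar set" where
  "dep f = {v. \<exists>p t. f (p(v := t)) \<noteq> f p}"

definition pd :: "('j state \<Rightarrow> real) \<Rightarrow> 'j dvar \<Rightarrow> 'j state \<Rightarrow> real" where
  "pd f v p = deriv (\<lambda>t. f (p(v := t))) (p v)"

fun pdl :: "'j dvar list \<Rightarrow> ('j state \<Rightarrow> real) \<Rightarrow> 'j state \<Rightarrow> real" where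
  "pdl [] f = f"
| "pdl (v # vs) f = pd (pdl vs f) v"

definition dynfun :: "('j state \<Rightarrow> real) \<Rightarrow> bool" where
  "dynfun f \<longleftrightarrow> finite (dep f) \<and>
     (\<forall>vs. continuous_on UNIV (pdl vs f) \<and>
        (\<forall>v p. ((\<lambda>t. pdl vs f (p(v := t))) has_real_derivative pd (pdl vs f) v p) (at (p v))))"

definition real_analytic_at :: "(('i::finite \<Rightarrow> real) \<Rightarrow> real) \<Rightarrow> ('i \<Rightarrow> real) \<Rightarrow> bool" where
  "real_analytic_at f y0 \<longleftrightarrow> (\<exists>r>0. \<exists>c :: ('i \<Rightarrow> nat) \<Rightarrow> real.
     \<forall>y. (\<forall>i. \<bar>y i - y0 i\<bar> < r) \<longrightarrow>
        ((\<lambda>a. c a * (\<Prod>i\<in>UNIV. (y i - y0 i) ^ a i)) has_sum f y) UNIV)"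

text \<open>Argument slots of F^j(x, n, u^j_{n,x}, u_n, u_{n+1}) (n fixed):
  AX = x, AB = u^j_{n,x}, AU l = u^l_n, AV l = u^l_{n+1}.\<close>
datatype 'j farg = AX | AB | AU 'j | AV 'j

instance farg :: (finite) finite
proof
  have "(UNIV :: 'a farg set) = {AX, AB} \<union> range AU \<union> range AV"
    by (auto intro: farg.exhaust)
  moreover have "finite ({AX, AB} \<union> range (AU :: 'a \<Rightarrow> 'a farg) \<union> range AV)" by simp
  ultimately show "finite (UNIV :: 'a farg set)" by simp
qed

definition analytic_rhs ::
  "(real \<Rightarrow> int \<Rightarrow> real \<Rightarrow> ('j::finite \<Rightarrow> real) \<Rightarrow> ('j \<Rightarrow> real) \<Rightarrow> real) \<Rightarrow> bool" where
  "analytic_rhs Fj \<longleftrightarrow> (\<forall>m y0. real_analytic_at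
      (\<lambda>y. Fj (y AX) m (y AB) (\<lambda>l. y (AU l)) (\<lambda>l. y (AV l))) y0)"

type_synonym 'j rhs = "'j \<Rightarrow> real \<Rightarrow> int \<Rightarrow> real \<Rightarrow> ('j \<Rightarrow> real) \<Rightarrow> ('j \<Rightarrow> real) \<Rightarrow> real"

text \<open>Fx F n j i p = u^j_{n+i,x} expressed in dynamical variables (i \<ge> 0).\<close>
fun Fx :: "'j rhs \<Rightarrow> int \<Rightarrow> 'j \<Rightarrow> nat \<Rightarrow> 'j state \<Rightarrow> real" where
  "Fx F n j 0 p = p (DUX j 0)"
| "Fx F n j (Suc i) p = F j (p DX) (n + int i) (Fx F n j i p)
      (\<lambda>l. p (DU l (int i))) (\<lambda>l. p (DU l (int i + 1)))"

text \<open>Gx G n j i p = u^j_{n-i,x} expressed in dynamical variables (i \<ge> 0).\<close>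
fun Gx :: "'j rhs \<Rightarrow> int \<Rightarrow> 'j \<Rightarrow> nat \<Rightarrow> 'j state \<Rightarrow> real" where
  "Gx G n j 0 p = p (DUX j 0)"
| "Gx G n j (Suc i) p = G j (p DX) (n - int i) (Gx G n j i p)
      (\<lambda>l. p (DU l (- int i))) (\<lambda>l. p (DU l (- int i - 1)))"

definition dxcoef :: "'j rhs \<Rightarrow> 'j rhs \<Rightarrow> int \<Rightarrow> 'j dvar \<Rightarrow> 'j state \<Rightarrow> real" where
  "dxcoef F G n v p = (case v of
       DX \<Rightarrow> 1
     | DUX j m \<Rightarrow> p (DUX j (Suc m))
     | DU j i \<Rightarrow> (if 0 \<le> i then Fx F n j (nat i) p else Gx G n j (nat (- i)) p))"

definition Dx :: "'j rhs \<Rightarrow> 'j rhs \<Rightarrow> int \<Rightarrow> ('j state \<Rightarrow> real) \<Rightarrow> 'j state \<Rightarrow> real" where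
  "Dx F G n f p = (\<Sum>v\<in>dep f. dxcoef F G n v p * pd f v p)"

text \<open>alpha j m is the coefficient alpha^j(m+1) of d/du^j_{n,x^(m+1)}.\<close>
definition ycoef :: "('j \<Rightarrow> nat \<Rightarrow> 'j state \<Rightarrow> real) \<Rightarrow> 'j dvar \<Rightarrow> 'j state \<Rightarrow> real" where
  "ycoef \<alpha> v p = (case v of DUX j m \<Rightarrow> \<alpha> j m p | _ \<Rightarrow> 0)"

definition Yop :: "('j \<Rightarrow> nat \<Rightarrow> 'j state \<Rightarrow> real) \<Rightarrow> ('j state \<Rightarrow> real) \<Rightarrow> 'j state \<Rightarrow> real" where
  "Yop \<alpha> f p = (\<Sum>v\<in>dep f. ycoef \<alpha> v p * pd f v p)"

end

(* Y involves only the x-derivatives of u_n, so it annihilates u^j_{n+1}; applying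
   [D_x, Y] = hY to u^j_{n+1} therefore gives Y F^j = 0, that is
   alpha^j(1) * dF^j/du^j_{n,x} = 0.  Unique solvability for u^j_{n-1,x} makes F^j injective
   in u^j_{n,x}, and F^j is differentiable there, so this partial derivative vanishes on no
   interval; continuity of alpha^j(1) then forces alpha^j(1) = 0.  Once alpha^j(k) = 0, Y
   annihilates u^j_{n,x^(k)}, and the relation applied to it gives
   alpha^j(k+1) = Y (D_x u^j_{n,x^(k)}) = 0. *)

theory Submission
  imports Defs
begin

lemma prod_power_single_coord:
  fixes s :: "'a::comm_semiring_1"
  shows "(\<Prod>l\<in>(UNIV::'i::finite set). (if l = i then s else 0) ^ a l) =
    (if \<forall>l. l \<noteq> i \<longrightarrow> a l = 0 then s ^ a i else 0)"
proof (cases "\<forall>l. l \<noteq> i \<longrightarrow> a l = 0")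
  case True
  then have "(\<Prod>l\<in>UNIV. (if l = i then s else 0) ^ a l) = (\<Prod>l\<in>UNIV. if l = i then s ^ a i else 1)"
    by (intro prod.cong) auto
  then show ?thesis
    using True by simp
next
  case False
  then obtain l where "l \<noteq> i" "a l \<noteq> 0"
    by blast
  then have "(\<Prod>l\<in>UNIV. (if l = i then s else 0) ^ a l) = 0"
    by (intro prod_zero bexI[of _ l]) (auto simp: zero_power)
  then show ?thesis
    using False by auto
qed

lemma real_analytic_at_line_sums:
  assumes "real_analytic_at f y0"
  obtains r d where "r > 0"
    and "\<And>s. \<bar>s\<bar> < r \<Longrightarrow> (\<lambda>k. d k * s ^ k) sums f (y0(i := y0 i + s))"
proof -
  obtain r c where "r > 0" and c: "\<And>y. (\<forall>l. \<bar>y l - y0 l\<bar> < r) \<Longrightarrow>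
      ((\<lambda>a. c a * (\<Prod>l\<in>UNIV. (y l - y0 l) ^ a l)) has_sum f y) UNIV"
    using assms unfolding real_analytic_at_def by blast
  define e where "e k = (\<lambda>l. if l = i then k else 0)" for k :: nat
  have e_inj: "inj e"
    unfolding inj_def e_def by (metis (full_types))
  have e_range: "range e = {a. \<forall>l. l \<noteq> i \<longrightarrow> a l = 0}"
    unfolding e_def by (auto intro!: image_eqI[where x = "a i" for a])
  have "(\<lambda>k. c (e k) * s ^ k) sums f (y0(i := y0 i + s))" if "\<bar>s\<bar> < r" for s
  proof -
    let ?y = "y0(i := y0 i + s)"
    have "?y l - y0 l = (if l = i then s else 0)" for l
      by simp
    then have "((\<lambda>a. c a * (if a \<in> range e then s ^ a i else 0)) has_sum f ?y) UNIV"
      using c[of ?y] \<open>\<bar>s\<bar> < r\<close> \<open>r > 0\<close> by (simp add: prod_power_single_coord e_range)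
    then have "((\<lambda>a. c a * s ^ a i) has_sum f ?y) (range e)"
      by (subst (asm) has_sum_cong_neutral[where T = "range e" and g = "\<lambda>a. c a * s ^ a i"]) auto
    then have "(((\<lambda>a. c a * s ^ a i) \<circ> e) has_sum f ?y) UNIV"
      by (simp add: has_sum_reindex[OF e_inj])
    then have "((\<lambda>k. c (e k) * s ^ k) has_sum f ?y) UNIV"
      by (simp add: o_def e_def)
    then show ?thesis
      by (rule has_sum_imp_sums)
  qed
  then show thesis
    by (rule that[OF \<open>r > 0\<close>])
qed

lemma real_analytic_at_line_differentiable:
  assumes "real_analytic_at f y0"
  shows "(\<lambda>t. f (y0(i := t))) differentiable (at (y0 i))"
proof -
  obtain r d where "r > 0" and d: "\<And>s. \<bar>s\<bar> < r \<Longrightarrow> (\<lambda>k. d k * s ^ k) sums f (y0(i := y0 i + s))"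
    using real_analytic_at_line_sums[OF assms] by metis
  have "((\<lambda>s. \<Sum>k. d k * s ^ k) has_field_derivative (\<Sum>k. diffs d k * 0 ^ k)) (at 0)"
    using d \<open>r > 0\<close> by (intro termdiffs_strong'[of r]) (auto intro: sums_summable[OF d])
  then have "((\<lambda>s. f (y0(i := y0 i + s))) has_field_derivative (\<Sum>k. diffs d k * 0 ^ k)) (at 0)"
    by (rule has_field_derivative_transform_within_open[of _ _ _ "{-r<..<r}"])
      (use \<open>r > 0\<close> in \<open>auto simp: abs_less_iff intro!: sums_unique[symmetric] d\<close>)
  then have "((\<lambda>t. f (y0(i := t))) has_field_derivative (\<Sum>k. diffs d k * 0 ^ k)) (at (0 + y0 i))"
    by (subst DERIV_shift) (simp add: add.commute)
  then show ?thesis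
    using real_differentiable_def by auto
qed

lemma analytic_rhs_differentiable:
  assumes "analytic_rhs Fj"
  shows "(\<lambda>b. Fj x m b u v) differentiable (at b0)"
proof -
  define y0 where "y0 = (\<lambda>a. case a of AX \<Rightarrow> x | AB \<Rightarrow> b0 | AU l \<Rightarrow> u l | AV l \<Rightarrow> v l)"
  have "real_analytic_at (\<lambda>y. Fj (y AX) m (y AB) (\<lambda>l. y (AU l)) (\<lambda>l. y (AV l))) y0"
    using assms unfolding analytic_rhs_def by blast
  from real_analytic_at_line_differentiable[OF this, of AB] show ?thesis
    by (simp add: y0_def)
qed

lemma dep_subsetI:
  assumes "\<And>p q. (\<And>v. v \<in> A \<Longrightarrow> p v = q v) \<Longrightarrow> f p = f q"
  shows "dep f \<subseteq> A"
proof
  fix v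
  assume "v \<in> dep f"
  then obtain p t where "f (p(v := t)) \<noteq> f p"
    unfolding dep_def by blast
  then show "v \<in> A"
    using assms[of "p(v := t)" p] by fastforce
qed

lemma pd_notin_dep: "v \<notin> dep f \<Longrightarrow> pd f v p = 0"
  by (simp add: dep_def pd_def)

lemma dep_coord: "dep (\<lambda>p. p w) = {w}"
  unfolding dep_def by (auto intro!: exI[of _ "\<lambda>_. 0"] exI[of _ 1])

lemma pd_coord: "pd (\<lambda>p. p w) v = (\<lambda>p. if v = w then 1 else 0)"
  by (auto simp: pd_def)

lemma pd_const: "pd (\<lambda>p. c) v = (\<lambda>p. 0)"
  by (simp add: fun_eq_iff pd_def)

lemma pd_pdl_coord: "pd (pdl vs (\<lambda>p. p w)) v = (\<lambda>p. if vs = [] \<and> v = w then 1 else 0)"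
proof (induction vs arbitrary: v)
  case Nil
  then show ?case
    by (simp add: pd_coord)
next
  case (Cons u vs)
  then show ?case
    by (simp add: pd_const)
qed

lemma dynfun_coord: "dynfun (\<lambda>p. p w)"
  unfolding dynfun_def
proof (intro conjI allI)
  show "finite (dep (\<lambda>p. p w))"
    by (simp add: dep_coord)
next
  fix vs :: "'a dvar list" and v p
  show "continuous_on UNIV (pdl vs (\<lambda>p. p w))"
    by (cases vs) (simp_all add: pd_pdl_coord)
  show "((\<lambda>t. pdl vs (\<lambda>p. p w) (p(v := t))) has_real_derivative pd (pdl vs (\<lambda>p. p w)) v p)
      (at (p v))"
    by (cases vs) (auto simp: pd_coord pd_pdl_coord pd_const intro!: derivative_eq_intros)
qed

lemma dynfun_isCont_line:
  assumes "dynfun f"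
  shows "isCont (\<lambda>t. f (p(v := t))) (p v)"
proof -
  have "((\<lambda>t. pdl [] f (p(v := t))) has_real_derivative pd (pdl [] f) v p) (at (p v))"
    using assms unfolding dynfun_def by blast
  then show ?thesis
    by (auto dest: DERIV_isCont)
qed

lemma Yop_coord: "Yop \<alpha> (\<lambda>p. p w) = ycoef \<alpha> w"
  by (simp add: fun_eq_iff Yop_def dep_coord pd_coord)

lemma Dx_coord: "Dx F G n (\<lambda>p. p w) = dxcoef F G n w"
  by (simp add: fun_eq_iff Dx_def dep_coord pd_coord)

lemma Dx_const: "Dx F G n (\<lambda>p. c) = (\<lambda>p. 0)"
  by (simp add: fun_eq_iff Dx_def dep_def)

lemma Yop_eq_single_jet_var:
  assumes "finite (dep g)" and "\<And>i k. DUX i k \<in> dep g \<Longrightarrow> i = j \<and> k = m"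
  shows "Yop \<alpha> g p = \<alpha> j m p * pd g (DUX j m) p"
proof -
  have "Yop \<alpha> g p = (\<Sum>v\<in>dep g. if v = DUX j m then \<alpha> j m p * pd g v p else 0)"
    unfolding Yop_def using assms(2) by (intro sum.cong) (auto simp: ycoef_def split: dvar.split)
  also have "\<dots> = \<alpha> j m p * pd g (DUX j m) p"
    using assms(1) by (auto simp: pd_notin_dep)
  finally show ?thesis .
qed

lemma Yop_Dx_coord_eq_0:
  assumes commutator: "\<forall>f. dynfun f \<longrightarrow>
        (\<forall>p. Dx F G n (Yop \<alpha> f) p - Yop \<alpha> (Dx F G n f) p = h p * Yop \<alpha> f p)"
    and "\<And>p. ycoef \<alpha> w p = 0"
  shows "Yop \<alpha> (dxcoef F G n w) p = 0"
proof -
  have "Yop \<alpha> (\<lambda>p. p w) = (\<lambda>p. 0)"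
    using assms(2) by (simp add: fun_eq_iff Yop_coord)
  moreover have "Dx F G n (Yop \<alpha> (\<lambda>p. p w)) p - Yop \<alpha> (Dx F G n (\<lambda>p. p w)) p
      = h p * Yop \<alpha> (\<lambda>p. p w) p"
    using commutator dynfun_coord by blast
  ultimately show ?thesis
    by (simp add: Dx_coord Dx_const)
qed

lemma isCont_eq_0_if_mult_deriv_inj_eq_0:
  fixes \<phi> \<psi> :: "real \<Rightarrow> real"
  assumes annihilates: "\<And>s. \<psi> s * \<phi>' s = 0"
    and "inj \<phi>" and \<phi>': "\<And>s. (\<phi> has_real_derivative \<phi>' s) (at s)"
    and "isCont \<psi> b"
  shows "\<psi> b = 0"
proof (rule ccontr)
  assume "\<psi> b \<noteq> 0"
  then obtain e where "e > 0" and e: "\<forall>y. dist b y < e \<longrightarrow> \<psi> y \<noteq> 0"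
    using continuous_at_avoid[OF \<open>isCont \<psi> b\<close>] by blast
  then have "b < b + e / 2"
    by simp
  then obtain z where z: "b < z" "z < b + e / 2"
    and mvt: "\<phi> (b + e / 2) - \<phi> b = (b + e / 2 - b) * \<phi>' z"
    using MVT2[of b "b + e / 2" \<phi> \<phi>', OF _ \<phi>'] by blast
  have "\<phi> (b + e / 2) \<noteq> \<phi> b"
    using injD[OF \<open>inj \<phi>\<close>] \<open>e > 0\<close> by force
  with mvt have "\<phi>' z \<noteq> 0"
    by auto
  moreover have "\<psi> z \<noteq> 0"
    using e z by (simp add: dist_real_def)
  ultimately show False
    using annihilates[of z] by simp
qed

lemma first_jet_coeff_eq_0:
  fixes F G :: "'j::finite rhs"
  assumes F_analytic: "analytic_rhs (F j)"
    and F_inj: "\<And>x m b b' u v. F j x m b u v = F j x m b' u v \<Longrightarrow> b = b'"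
    and alpha_fun: "dynfun (\<alpha> j 0)"
    and commutator: "\<forall>f. dynfun f \<longrightarrow>
        (\<forall>p. Dx F G n (Yop \<alpha> f) p - Yop \<alpha> (Dx F G n f) p = h p * Yop \<alpha> f p)"
  shows "\<alpha> j 0 p = 0"
proof -
  define \<phi> where "\<phi> q = (\<lambda>b. F j (q DX) n b (\<lambda>l. q (DU l 0)) (\<lambda>l. q (DU l 1)))"
    for q :: "'j state"
  define g where "g q = \<phi> q (q (DUX j 0))" for q
  have "dxcoef F G n (DU j 1) = g"
    by (rule ext) (simp add: dxcoef_def g_def \<phi>_def)
  then have Yg: "Yop \<alpha> g q = 0" for q
    using Yop_Dx_coord_eq_0[OF commutator, of "DU j 1"] by (simp add: ycoef_def)
  have dep_g: "dep g \<subseteq> {DX, DUX j 0} \<union> range (\<lambda>l. DU l 0) \<union> range (\<lambda>l. DU l 1)"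
    by (rule dep_subsetI) (simp add: g_def \<phi>_def)
  then have "Yop \<alpha> g q = \<alpha> j 0 q * pd g (DUX j 0) q" for q
    by (intro Yop_eq_single_jet_var[OF finite_subset[OF dep_g]]) auto
  moreover have "pd g (DUX j 0) q = deriv (\<phi> q) (q (DUX j 0))" for q
    by (simp add: pd_def g_def \<phi>_def)
  moreover have "\<phi> (q(DUX j 0 := t)) = \<phi> q" for q t
    by (simp add: \<phi>_def)
  ultimately have annihilates: "\<alpha> j 0 (p(DUX j 0 := t)) * deriv (\<phi> p) t = 0" for t
    using Yg[of "p(DUX j 0 := t)"] by simp
  have "inj (\<phi> p)"
    using F_inj by (auto intro: injI simp: \<phi>_def)
  moreover have "(\<phi> p has_real_derivative deriv (\<phi> p) s) (at s)" for s
    using analytic_rhs_differentiable[OF F_analytic]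
    by (simp add: \<phi>_def DERIV_deriv_iff_real_differentiable)
  moreover have "isCont (\<lambda>t. \<alpha> j 0 (p(DUX j 0 := t))) (p (DUX j 0))"
    using alpha_fun by (rule dynfun_isCont_line)
  ultimately show ?thesis
    using annihilates isCont_eq_0_if_mult_deriv_inj_eq_0[where \<psi> = "\<lambda>t. \<alpha> j 0 (p(DUX j 0 := t))"
        and \<phi> = "\<phi> p" and \<phi>' = "deriv (\<phi> p)" and b = "p (DUX j 0)"]
    by simp
qed

theorem lemma3:
  fixes F G :: "('j::finite) rhs"
    and n :: int
    and \<alpha> :: "'j \<Rightarrow> nat \<Rightarrow> 'j state \<Rightarrow> real"
    and h :: "'j state \<Rightarrow> real"
  assumes F_analytic: "\<forall>j. analytic_rhs (F j)"
    and rewrite_unique: "\<forall>j x m a b u v. a = F j x m b u v \<longleftrightarrow> b = G j x (m + 1) a v u"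
    and alpha_fun: "\<forall>j k. dynfun (\<alpha> j k)"
    and h_fun: "dynfun h"
    and commutator: "\<forall>f. dynfun f \<longrightarrow>
        (\<forall>p. Dx F G n (Yop \<alpha> f) p - Yop \<alpha> (Dx F G n f) p = h p * Yop \<alpha> f p)"
  shows "\<forall>j k p. \<alpha> j k p = 0"
proof -
  have F_inj: "b = b'" if "F j x m b u v = F j x m b' u v" for j x m b b' u v
  proof -
    have "b = G j x (m + 1) (F j x m b u v) v u" "b' = G j x (m + 1) (F j x m b' u v) v u"
      using rewrite_unique by blast+
    then show ?thesis
      using that by simp
  qed
  have "\<alpha> j k p = 0" for j k p
  proof (induction k arbitrary: p)
    case 0
    show ?case
      using F_analytic alpha_fun by (intro first_jet_coeff_eq_0[OF _ F_inj _ commutator]) auto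
  next
    case (Suc k)
    then have "ycoef \<alpha> (DUX j k) p = 0" for p
      by (simp add: ycoef_def)
    from Yop_Dx_coord_eq_0[OF commutator this] show ?case
      by (simp add: dxcoef_def[abs_def] Yop_coord ycoef_def)
  qed
  then show ?thesis
    by blast
qed

end
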